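(* Let $U,V\in U(2^n)$ satisfy $D(U,V)\le\epsilon$. Then for every $P\in\mathcal{P}_n$, $$D(UPU^T, VPV^T)\le 2\epsilon,$$ where the transpose is taken in the computational basis.
   Context: For $d\times d$ unitaries ($d=2^n$), $D(U_1,U_2)=\frac{1}{\sqrt{2d^2}}\|U_1\otimes U_1^*-U_2\otimes U_2^*\|_2$ with $\|A\|_2=\sqrt{\mathrm{Tr}[A^\dagger A]}$ the Frobenius norm; equivalently $D(U_1,U_2)=\sqrt{1-\frac{1}{d^2}|\mathrm{Tr}[U_1U_2^\dagger]|^2}$. $\mathcal{P}_n$ is the $n$-qubit Pauli group, consisting of $i^k P_1\otimes\cdots\otimes P_n$ with $P_j\in\{I,X,Y,Z\}$, $k\in\{0,1,2,3\}$. *)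

theory Defs
  imports "Jordan_Normal_Form.Matrix"
begin

definition cconj :: "complex mat \<Rightarrow> complex mat" where
  "cconj A = map_mat cnj A"

definition dagger :: "complex mat \<Rightarrow> complex mat" where
  "dagger A = transpose_mat (cconj A)"

definition unitary :: "nat \<Rightarrow> complex mat \<Rightarrow> bool" where
  "unitary d U \<longleftrightarrow> U \<in> carrier_mat d d \<and> U * dagger U = 1\<^sub>m d \<and> dagger U * U = 1\<^sub>m d"

definition kron :: "complex mat \<Rightarrow> complex mat \<Rightarrow> complex mat" where
  "kron A B = mat (dim_row A * dim_row B) (dim_col A * dim_col B)
     (\<lambda>(i,j). A $$ (i div dim_row B, j div dim_col B) * B $$ (i mod dim_row B, j mod dim_col B))"

definition mtrace :: "complex mat \<Rightarrow> complex" where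
  "mtrace A = (\<Sum>i<dim_row A. A $$ (i,i))"

definition frob :: "complex mat \<Rightarrow> real" where
  "frob A = sqrt (Re (mtrace (dagger A * A)))"

definition Dist :: "complex mat \<Rightarrow> complex mat \<Rightarrow> real" where
  "Dist U1 U2 = frob (kron U1 (cconj U1) - kron U2 (cconj U2)) / sqrt (2 * (real (dim_row U1))^2)"

definition pI :: "complex mat" where "pI = mat_of_rows_list 2 [[1,0],[0,1]]"
definition pX :: "complex mat" where "pX = mat_of_rows_list 2 [[0,1],[1,0]]"
definition pY :: "complex mat" where "pY = mat_of_rows_list 2 [[0,-\<i>],[\<i>,0]]"
definition pZ :: "complex mat" where "pZ = mat_of_rows_list 2 [[1,0],[0,-1]]"

fun kron_list :: "complex mat list \<Rightarrow> complex mat" where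
  "kron_list [] = 1\<^sub>m 1"
| "kron_list (A # As) = kron A (kron_list As)"

definition pauli_group :: "nat \<Rightarrow> complex mat set" where
  "pauli_group n = {(\<i> ^ k) \<cdot>\<^sub>m kron_list ps | k ps.
      k < 4 \<and> length ps = n \<and> set ps \<subseteq> {pI, pX, pY, pZ}}"

end

theory Submission
  imports Defs "HOL-Analysis.L2_Norm"
begin

(* Writing K W = W \<otimes> W^*, the map K is multiplicative and commutes with transposition, so
   K (U P U^T) = K U \<cdot> K P \<cdot> (K U)^T. For unitaries A, B, P one has
   A P A^T - B P B^T = (A P)(A - B)^T + (A - B)(P B^T); both outer factors are unitary, and the
   Frobenius norm is invariant under unitary multiplication and under transposition, so
   ||A P A^T - B P B^T||_2 \<le> 2 ||A - B||_2. Applied to A = K U, B = K V this is the claim. *)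

lemma sum_lessThan_mult:
  fixes f :: "nat \<Rightarrow> 'a::comm_monoid_add"
  shows "(\<Sum>t<m * n. f t) = (\<Sum>a<m. \<Sum>b<n. f (a * n + b))"
proof -
  have "(\<Sum>t<m * n. f t) = (\<Sum>a<m. sum f {a * n..<a * n + n})"
    by (simp add: sum.nat_group)
  also have "\<dots> = (\<Sum>a<m. \<Sum>b<n. f (a * n + b))"
  proof (rule sum.cong[OF refl])
    fix a
    show "sum f {a * n..<a * n + n} = (\<Sum>b<n. f (a * n + b))"
      using sum.shift_bounds_nat_ivl[of f 0 "a * n" n] by (simp add: atLeast0LessThan add.commute)
  qed
  finally show ?thesis .
qed

lemma div_mod_less_of_less_mult: "(i::nat) < a * b \<Longrightarrow> i div b < a \<and> i mod b < b"
  by (cases "b = 0") (auto simp: less_mult_imp_div_less)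

lemma mult_add_less_mult: "(a::nat) < m \<Longrightarrow> b < n \<Longrightarrow> a * n + b < m * n"
proof -
  assume "a < m" "b < n"
  then have "a * n + b < Suc a * n" by simp
  also have "\<dots> \<le> m * n" using \<open>a < m\<close> by (intro mult_le_mono1) simp
  finally show ?thesis .
qed

subsection \<open>Kronecker product\<close>

lemma dim_kron [simp]:
  "dim_row (kron A B) = dim_row A * dim_row B"
  "dim_col (kron A B) = dim_col A * dim_col B"
  by (simp_all add: kron_def)

lemma index_kron [simp]:
  "i < dim_row A * dim_row B \<Longrightarrow> j < dim_col A * dim_col B \<Longrightarrow>
   kron A B $$ (i, j) = A $$ (i div dim_row B, j div dim_col B) * B $$ (i mod dim_row B, j mod dim_col B)"
  by (simp add: kron_def)

lemma kron_carrier_mat: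
  "A \<in> carrier_mat ra ca \<Longrightarrow> B \<in> carrier_mat rb cb \<Longrightarrow> kron A B \<in> carrier_mat (ra * rb) (ca * cb)"
  by auto

lemma kron_mult:
  assumes A: "A \<in> carrier_mat ra ca" and C: "C \<in> carrier_mat ca cc"
    and B: "B \<in> carrier_mat rb cb" and D: "D \<in> carrier_mat cb cd"
  shows "kron (A * C) (B * D) = kron A B * kron C D"
proof (rule eq_matI)
  fix i j assume "i < dim_row (kron A B * kron C D)" and "j < dim_col (kron A B * kron C D)"
  then have i: "i < ra * rb" and j: "j < cc * cd" using A B C D by auto
  have "(kron A B * kron C D) $$ (i, j) = (\<Sum>t<ca * cb. kron A B $$ (i, t) * kron C D $$ (t, j))"
    using i j A B C D by (simp add: scalar_prod_def lessThan_atLeast0)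
  also have "\<dots> = (\<Sum>a<ca. \<Sum>b<cb.
      (A $$ (i div rb, a) * C $$ (a, j div cd)) * (B $$ (i mod rb, b) * D $$ (b, j mod cd)))"
    unfolding sum_lessThan_mult using i j A B C D
    by (intro sum.cong refl) (simp add: mult_add_less_mult mult_ac)
  also have "\<dots> = (\<Sum>a<ca. A $$ (i div rb, a) * C $$ (a, j div cd))
                 * (\<Sum>b<cb. B $$ (i mod rb, b) * D $$ (b, j mod cd))"
    by (simp add: sum_product)
  also have "\<dots> = kron (A * C) (B * D) $$ (i, j)"
    using i j A B C D div_mod_less_of_less_mult[OF i] div_mod_less_of_less_mult[OF j]
    by (simp add: scalar_prod_def lessThan_atLeast0)
  finally show "kron (A * C) (B * D) $$ (i, j) = (kron A B * kron C D) $$ (i, j)" by simp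
qed (use A B C D in auto)

lemma transpose_kron: "transpose_mat (kron A B) = kron (transpose_mat A) (transpose_mat B)"
  by (rule eq_matI) (auto simp: div_mod_less_of_less_mult)

lemma kron_one_mat: "kron (1\<^sub>m a) (1\<^sub>m b) = 1\<^sub>m (a * b)"
proof (rule eq_matI)
  fix i j assume "i < dim_row (1\<^sub>m (a * b))" "j < dim_col (1\<^sub>m (a * b))"
  moreover have "(i div b = j div b \<and> i mod b = j mod b) = (i = j)"
    by (metis div_mult_mod_eq)
  ultimately show "kron (1\<^sub>m a) (1\<^sub>m b) $$ (i, j) = 1\<^sub>m (a * b) $$ (i, j)"
    using div_mod_less_of_less_mult[of i a b] div_mod_less_of_less_mult[of j a b] by auto
qed auto

subsection \<open>Conjugation and adjoint\<close>

lemma dim_cconj [simp]: "dim_row (cconj A) = dim_row A" "dim_col (cconj A) = dim_col A"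
  by (simp_all add: cconj_def)

lemma index_cconj [simp]: "i < dim_row A \<Longrightarrow> j < dim_col A \<Longrightarrow> cconj A $$ (i, j) = cnj (A $$ (i, j))"
  by (simp add: cconj_def)

lemma cconj_carrier_mat [simp]: "cconj A \<in> carrier_mat a b \<longleftrightarrow> A \<in> carrier_mat a b"
  by (simp add: cconj_def)

lemma dim_dagger [simp]: "dim_row (dagger A) = dim_col A" "dim_col (dagger A) = dim_row A"
  by (simp_all add: dagger_def)

lemma index_dagger [simp]: "i < dim_col A \<Longrightarrow> j < dim_row A \<Longrightarrow> dagger A $$ (i, j) = cnj (A $$ (j, i))"
  by (simp add: dagger_def)

lemma dagger_carrier_mat [simp]: "dagger A \<in> carrier_mat a b \<longleftrightarrow> A \<in> carrier_mat b a"
  by (simp add: dagger_def)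

lemma cconj_mult:
  "A \<in> carrier_mat a b \<Longrightarrow> B \<in> carrier_mat b c \<Longrightarrow> cconj (A * B) = cconj A * cconj B"
  by (rule eq_matI) (auto simp: scalar_prod_def cnj_sum)

lemma dagger_mult:
  assumes "A \<in> carrier_mat a b" and "B \<in> carrier_mat b c"
  shows "dagger (A * B) = dagger B * dagger A"
  unfolding dagger_def cconj_mult[OF assms]
  by (rule transpose_mult[of _ a b]) (use assms in auto)

lemma cconj_one_mat [simp]: "cconj (1\<^sub>m n) = 1\<^sub>m n"
  by (rule eq_matI) auto

lemma dagger_one_mat [simp]: "dagger (1\<^sub>m n) = 1\<^sub>m n"
  by (rule eq_matI) auto

lemma dagger_cconj: "dagger (cconj A) = cconj (dagger A)"
  by (rule eq_matI) auto

lemma cconj_transpose: "cconj (transpose_mat A) = transpose_mat (cconj A)"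
  by (rule eq_matI) auto

lemma dagger_transpose: "dagger (transpose_mat A) = transpose_mat (dagger A)"
  by (rule eq_matI) auto

lemma dagger_kron: "dagger (kron A B) = kron (dagger A) (dagger B)"
  by (rule eq_matI) (auto simp: div_mod_less_of_less_mult)

lemma dagger_smult: "dagger (c \<cdot>\<^sub>m A) = cnj c \<cdot>\<^sub>m dagger A"
  by (rule eq_matI) auto

subsection \<open>Unitary matrices\<close>

lemma unitaryD:
  assumes "unitary d U"
  shows "U \<in> carrier_mat d d" "U * dagger U = 1\<^sub>m d" "dagger U * U = 1\<^sub>m d"
  using assms by (auto simp: unitary_def)

lemma unitary_one_mat: "unitary n (1\<^sub>m n)"
  by (simp add: unitary_def)

lemma unitary_mult:
  assumes A: "unitary d A" and B: "unitary d B"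
  shows "unitary d (A * B)"
proof -
  have Ac: "A \<in> carrier_mat d d" and Bc: "B \<in> carrier_mat d d"
    and dAc: "dagger A \<in> carrier_mat d d" and dBc: "dagger B \<in> carrier_mat d d"
    using A B unitaryD by auto
  have "A * B * dagger (A * B) = A * (B * dagger B) * dagger A"
    using Ac Bc dAc dBc by (simp add: dagger_mult[OF Ac Bc] assoc_mult_mat[of _ d d _ d _ d])
  moreover have "dagger (A * B) * (A * B) = dagger B * (dagger A * A) * B"
    using Ac Bc dAc dBc by (simp add: dagger_mult[OF Ac Bc] assoc_mult_mat[of _ d d _ d _ d])
  ultimately show ?thesis
    using Ac Bc dAc dBc unitaryD[OF A] unitaryD[OF B] by (simp add: unitary_def)
qed

lemma unitary_kron:
  assumes A: "unitary a A" and B: "unitary b B"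
  shows "unitary (a * b) (kron A B)"
proof -
  have Ac: "A \<in> carrier_mat a a" and Bc: "B \<in> carrier_mat b b"
    and dAc: "dagger A \<in> carrier_mat a a" and dBc: "dagger B \<in> carrier_mat b b"
    using A B unitaryD by auto
  have "kron A B * dagger (kron A B) = kron (A * dagger A) (B * dagger B)"
    by (simp add: dagger_kron kron_mult[OF Ac dAc Bc dBc])
  moreover have "dagger (kron A B) * kron A B = kron (dagger A * A) (dagger B * B)"
    by (simp add: dagger_kron kron_mult[OF dAc Ac dBc Bc])
  ultimately show ?thesis
    using kron_carrier_mat[OF Ac Bc] unitaryD[OF A] unitaryD[OF B] by (simp add: unitary_def kron_one_mat)
qed

lemma unitary_cconj:
  assumes U: "unitary d U"
  shows "unitary d (cconj U)"
proof -
  have Uc: "U \<in> carrier_mat d d" and dUc: "dagger U \<in> carrier_mat d d"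
    using unitaryD[OF U] by auto
  show ?thesis
    using unitaryD[OF U] Uc
    unfolding unitary_def dagger_cconj cconj_mult[OF Uc dUc, symmetric] cconj_mult[OF dUc Uc, symmetric]
    by simp
qed

lemma unitary_transpose:
  assumes U: "unitary d U"
  shows "unitary d (transpose_mat U)"
proof -
  have Uc: "U \<in> carrier_mat d d" and dUc: "dagger U \<in> carrier_mat d d"
    using unitaryD[OF U] by auto
  show ?thesis
    using unitaryD[OF U] Uc
    unfolding unitary_def dagger_transpose transpose_mult[OF dUc Uc, symmetric] transpose_mult[OF Uc dUc, symmetric]
    by simp
qed

lemma unitary_smult:
  assumes U: "unitary d U" and c: "c * cnj c = 1"
  shows "unitary d (c \<cdot>\<^sub>m U)"
proof -
  have Uc: "U \<in> carrier_mat d d" and dUc: "dagger U \<in> carrier_mat d d"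
    using unitaryD[OF U] by auto
  have "(c \<cdot>\<^sub>m U) * dagger (c \<cdot>\<^sub>m U) = (c * cnj c) \<cdot>\<^sub>m (U * dagger U)"
    "dagger (c \<cdot>\<^sub>m U) * (c \<cdot>\<^sub>m U) = (c * cnj c) \<cdot>\<^sub>m (dagger U * U)"
    by (rule eq_matI; use Uc dUc in \<open>auto simp: dagger_smult scalar_prod_def sum_distrib_left mult_ac\<close>)+
  moreover have "(1::complex) \<cdot>\<^sub>m 1\<^sub>m d = 1\<^sub>m d"
    by (rule eq_matI) auto
  ultimately show ?thesis
    using Uc unitaryD[OF U] c by (simp add: unitary_def)
qed

lemma carrier_mat_paulis:
  "pI \<in> carrier_mat 2 2" "pX \<in> carrier_mat 2 2" "pY \<in> carrier_mat 2 2" "pZ \<in> carrier_mat 2 2"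
  unfolding pI_def pX_def pY_def pZ_def by (auto simp: mat_of_rows_list_def)

lemma hermitian_paulis: "dagger pI = pI" "dagger pX = pX" "dagger pY = pY" "dagger pZ = pZ"
  unfolding pI_def pX_def pY_def pZ_def
  by (rule eq_matI; auto simp: mat_of_rows_list_def numeral_2_eq_2 less_Suc_eq)+

lemma involutive_paulis: "pI * pI = 1\<^sub>m 2" "pX * pX = 1\<^sub>m 2" "pY * pY = 1\<^sub>m 2" "pZ * pZ = 1\<^sub>m 2"
  unfolding pI_def pX_def pY_def pZ_def
  by (rule eq_matI; auto simp: mat_of_rows_list_def scalar_prod_def numeral_2_eq_2 less_Suc_eq)+

lemma unitary_paulis: "unitary 2 pI" "unitary 2 pX" "unitary 2 pY" "unitary 2 pZ"
  using carrier_mat_paulis hermitian_paulis involutive_paulis by (simp_all add: unitary_def)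

lemma unitary_kron_list: "set ps \<subseteq> {pI, pX, pY, pZ} \<Longrightarrow> unitary (2 ^ length ps) (kron_list ps)"
proof (induction ps)
  case Nil
  then show ?case by (simp add: unitary_one_mat)
next
  case (Cons A As)
  then have "unitary 2 A" and "unitary (2 ^ length As) (kron_list As)"
    using unitary_paulis by auto
  then have "unitary (2 * 2 ^ length As) (kron A (kron_list As))"
    by (rule unitary_kron)
  then show ?case by simp
qed

lemma unitary_pauli_group:
  assumes "P \<in> pauli_group n"
  shows "unitary (2 ^ n) P"
proof -
  obtain k ps where P: "P = (\<i> ^ k) \<cdot>\<^sub>m kron_list ps"
    and n: "length ps = n" and ps: "set ps \<subseteq> {pI, pX, pY, pZ}"
    using assms by (auto simp: pauli_group_def)
  have "\<i> ^ k * cnj (\<i> ^ k) = 1"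
    by (simp add: power_mult_distrib[symmetric])
  with unitary_kron_list[OF ps] show ?thesis
    unfolding P n by (rule unitary_smult)
qed

subsection \<open>Frobenius norm\<close>

lemma frob_eq_sqrt_sum: "frob A = sqrt (\<Sum>i<dim_row A. \<Sum>j<dim_col A. (cmod (A $$ (i, j)))\<^sup>2)"
proof -
  have "Re (mtrace (dagger A * A)) = (\<Sum>j<dim_col A. \<Sum>i<dim_row A. Re (cnj (A $$ (i, j)) * A $$ (i, j)))"
    by (simp add: mtrace_def scalar_prod_def lessThan_atLeast0)
  also have "\<dots> = (\<Sum>j<dim_col A. \<Sum>i<dim_row A. (cmod (A $$ (i, j)))\<^sup>2)"
    by (simp only: mult.commute[of "cnj _"] complex_norm_square[symmetric] Re_complex_of_real)
  finally show ?thesis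
    by (simp add: frob_def sum.swap[of _ "{..<dim_col A}"])
qed

lemma frob_eq_L2_set:
  "frob A = L2_set (\<lambda>(i, j). cmod (A $$ (i, j))) ({..<dim_row A} \<times> {..<dim_col A})"
  by (simp add: frob_eq_sqrt_sum L2_set_def sum.cartesian_product case_prod_unfold)

lemma frob_transpose: "frob (transpose_mat A) = frob A"
  by (simp add: frob_eq_sqrt_sum sum.swap[of _ "{..<dim_col A}"])

lemma frob_add_le:
  assumes "A \<in> carrier_mat r c" and "B \<in> carrier_mat r c"
  shows "frob (A + B) \<le> frob A + frob B"
proof -
  let ?S = "{..<r} \<times> {..<c}"
  have "frob (A + B) = L2_set (\<lambda>(i, j). cmod (A $$ (i, j) + B $$ (i, j))) ?S"
    unfolding frob_eq_L2_set using assms by (intro L2_set_cong) auto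
  also have "\<dots> \<le> L2_set (\<lambda>(i, j). cmod (A $$ (i, j)) + cmod (B $$ (i, j))) ?S"
    by (intro L2_set_mono) (auto simp: norm_triangle_ineq)
  also have "\<dots> \<le> frob A + frob B"
    unfolding frob_eq_L2_set using assms L2_set_triangle_ineq[of "\<lambda>(i, j). cmod (A $$ (i, j))"]
    by (simp add: case_prod_unfold)
  finally show ?thesis .
qed

lemma frob_unitary_mult:
  assumes M: "unitary d M" and N: "N \<in> carrier_mat d m"
  shows "frob (M * N) = frob N"
proof -
  have Mc: "M \<in> carrier_mat d d" and dMc: "dagger M \<in> carrier_mat d d"
    and dNc: "dagger N \<in> carrier_mat m d"
    using unitaryD[OF M] N by auto
  have "dagger (M * N) * (M * N) = dagger N * (dagger M * M) * N"
    using Mc N dMc dNc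
    by (simp add: dagger_mult[OF Mc N] assoc_mult_mat[of _ m d _ d _ m] assoc_mult_mat[of _ d d _ d _ m])
  also have "\<dots> = dagger N * N"
    using unitaryD[OF M] dNc by simp
  finally show ?thesis by (simp add: frob_def)
qed

lemma frob_mult_unitary:
  assumes M: "unitary d M" and N: "N \<in> carrier_mat m d"
  shows "frob (N * M) = frob N"
proof -
  have Mc: "M \<in> carrier_mat d d" using unitaryD[OF M] by auto
  have "frob (N * M) = frob (transpose_mat M * transpose_mat N)"
    by (simp add: transpose_mult[OF N Mc, symmetric] frob_transpose)
  also have "\<dots> = frob N"
    using frob_unitary_mult[OF unitary_transpose[OF M]] N by (simp add: frob_transpose)
  finally show ?thesis .
qed

lemma diff_add_diff_mat:
  fixes X :: "'a :: ab_group_add mat"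
  shows "X \<in> carrier_mat r c \<Longrightarrow> Y \<in> carrier_mat r c \<Longrightarrow> Z \<in> carrier_mat r c \<Longrightarrow> X - Y + (Y - Z) = X - Z"
  by (rule eq_matI) auto

lemma frob_congruence_diff_le:
  assumes A: "unitary d A" and B: "unitary d B" and P: "unitary d P"
  shows "frob (A * P * transpose_mat A - B * P * transpose_mat B) \<le> 2 * frob (A - B)"
proof -
  have Ac: "A \<in> carrier_mat d d" and Bc: "B \<in> carrier_mat d d" and Pc: "P \<in> carrier_mat d d"
    using A B P unitaryD by auto
  have "(A * P) * transpose_mat (A - B) = A * P * transpose_mat A - A * P * transpose_mat B"
    unfolding transpose_minus[OF Ac Bc] by (rule mult_minus_distrib_mat) (use Ac Bc Pc in auto)
  moreover have "(A - B) * (P * transpose_mat B) = A * P * transpose_mat B - B * P * transpose_mat B"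
    using minus_mult_distrib_mat[OF Ac Bc, of "P * transpose_mat B" d] Ac Bc Pc by simp
  ultimately have "A * P * transpose_mat A - B * P * transpose_mat B
      = (A * P) * transpose_mat (A - B) + (A - B) * (P * transpose_mat B)"
    using Ac Bc Pc by (simp add: diff_add_diff_mat[of _ d d])
  also have "frob \<dots> \<le> frob ((A * P) * transpose_mat (A - B)) + frob ((A - B) * (P * transpose_mat B))"
    by (rule frob_add_le[of _ d d]) (use Ac Bc Pc in auto)
  also have "frob ((A * P) * transpose_mat (A - B)) = frob (transpose_mat (A - B))"
    by (rule frob_unitary_mult[OF unitary_mult[OF A P]]) (use Ac Bc in auto)
  also have "frob ((A - B) * (P * transpose_mat B)) = frob (A - B)"
    by (rule frob_mult_unitary[OF unitary_mult[OF P unitary_transpose[OF B]]]) (use Ac Bc in auto)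
  finally show ?thesis by (simp add: frob_transpose)
qed

subsection \<open>The distance\<close>

definition kron_conj :: "complex mat \<Rightarrow> complex mat" where
  "kron_conj W = kron W (cconj W)"

lemma Dist_kron_conj:
  "Dist U V = frob (kron_conj U - kron_conj V) / sqrt (2 * (real (dim_row U))\<^sup>2)"
  by (simp add: Dist_def kron_conj_def)

lemma unitary_kron_conj: "unitary d W \<Longrightarrow> unitary (d * d) (kron_conj W)"
  unfolding kron_conj_def by (intro unitary_kron unitary_cconj)

lemma kron_conj_mult:
  "A \<in> carrier_mat d d \<Longrightarrow> B \<in> carrier_mat d d \<Longrightarrow> kron_conj (A * B) = kron_conj A * kron_conj B"
  unfolding kron_conj_def cconj_mult[of A d d B d] by (intro kron_mult[of _ d d _ d _ d]) auto

lemma kron_conj_transpose: "kron_conj (transpose_mat A) = transpose_mat (kron_conj A)"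
  by (simp add: kron_conj_def cconj_transpose transpose_kron)

lemma kron_conj_congruence:
  assumes "A \<in> carrier_mat d d" and "P \<in> carrier_mat d d"
  shows "kron_conj (A * P * transpose_mat A) = kron_conj A * kron_conj P * transpose_mat (kron_conj A)"
proof -
  have "kron_conj (A * P * transpose_mat A) = kron_conj (A * P) * kron_conj (transpose_mat A)"
    by (rule kron_conj_mult) (use assms in auto)
  then show ?thesis
    by (simp only: kron_conj_mult[OF assms] kron_conj_transpose)
qed

theorem lemma7:
  fixes n :: nat and U V :: "complex mat" and \<epsilon> :: real
  assumes "unitary (2 ^ n) U" and "unitary (2 ^ n) V"
    and "Dist U V \<le> \<epsilon>"
    and "P \<in> pauli_group n"
  shows "Dist (U * P * transpose_mat U) (V * P * transpose_mat V) \<le> 2 * \<epsilon>"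
proof -
  let ?d = "2 ^ n :: nat"
  have P: "unitary ?d P" using assms(4) by (rule unitary_pauli_group)
  have conj: "kron_conj (W * P * transpose_mat W) = kron_conj W * kron_conj P * transpose_mat (kron_conj W)"
    if "unitary ?d W" for W
    using that P unitaryD(1) by (intro kron_conj_congruence)
  have "frob (kron_conj (U * P * transpose_mat U) - kron_conj (V * P * transpose_mat V))
      \<le> 2 * frob (kron_conj U - kron_conj V)"
    unfolding conj[OF assms(1)] conj[OF assms(2)]
    using assms(1,2) P by (intro frob_congruence_diff_le[where d = "?d * ?d"] unitary_kron_conj)
  moreover have "dim_row U = ?d" using assms(1) unitaryD by auto
  ultimately have "Dist (U * P * transpose_mat U) (V * P * transpose_mat V) \<le> 2 * Dist U V"
    by (simp add: Dist_kron_conj divide_right_mono)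
  with assms(3) show ?thesis by simp
qed

end
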